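(* Let $A,B$ be an LR pair on $V$. Then there exists a unique $\mathbb F$-algebra antiautomorphism $\dagger$ of $\mathrm{End}(V)$ such that $A^\dagger=B$ and $B^\dagger=A$. Moreover $(X^\dagger)^\dagger=X$ for all $X\in\mathrm{End}(V)$.
   Context: Let $V$ be a vector space over a field $\mathbb F$ with $\dim V=d+1$. A decomposition of $V$ is a sequence $(V_i)_{i=0}^d$ of one-dimensional subspaces with $V=\bigoplus_{i=0}^d V_i$. An element $X\in\mathrm{End}(V)$ lowers the decomposition if $XV_i=V_{i-1}$ for $1\le i\le d$ and $XV_0=0$; it raises it if $XV_i=V_{i+1}$ for $0\le i\le d-1$ and $XV_d=0$. An ordered pair $A,B\in\mathrm{End}(V)$ is an LR pair on $V$ if some decomposition of $V$ is lowered by $A$ and raised by $B$. An antiautomorphism of $\mathrm{End}(V)$ is an $\mathbb F$-linear bijection $\sigma$ with $(XY)^\sigma=Y^\sigma X^\sigma$. *)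

theory Defs
  imports Main "HOL.Vector_Spaces"
begin

definition End :: "('a::field \<Rightarrow> 'v::ab_group_add \<Rightarrow> 'v) \<Rightarrow> ('v \<Rightarrow> 'v) set" where
  "End scale = {X. Vector_Spaces.linear scale scale X}"

definition is_decomposition ::
  "('a::field \<Rightarrow> 'v::ab_group_add \<Rightarrow> 'v) \<Rightarrow> nat \<Rightarrow> (nat \<Rightarrow> 'v set) \<Rightarrow> bool" where
  "is_decomposition scale d W \<longleftrightarrow>
     (\<forall>i\<le>d. module.subspace scale (W i) \<and> vector_space.dim scale (W i) = 1) \<and>
     (\<forall>x. \<exists>!w. (\<forall>i>d. w i = 0) \<and> (\<forall>i\<le>d. w i \<in> W i) \<and> x = (\<Sum>i\<le>d. w i))"

definition lowers ::
  "nat \<Rightarrow> (nat \<Rightarrow> 'v::ab_group_add set) \<Rightarrow> ('v \<Rightarrow> 'v) \<Rightarrow> bool" where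
  "lowers d W X \<longleftrightarrow> (\<forall>i. 1 \<le> i \<and> i \<le> d \<longrightarrow> X ` W i = W (i - 1)) \<and> X ` W 0 = {0}"

definition raises ::
  "nat \<Rightarrow> (nat \<Rightarrow> 'v::ab_group_add set) \<Rightarrow> ('v \<Rightarrow> 'v) \<Rightarrow> bool" where
  "raises d W X \<longleftrightarrow> (\<forall>i. i + 1 \<le> d \<longrightarrow> X ` W i = W (i + 1)) \<and> X ` W d = {0}"

definition LR_pair ::
  "('a::field \<Rightarrow> 'v::ab_group_add \<Rightarrow> 'v) \<Rightarrow> nat \<Rightarrow> ('v \<Rightarrow> 'v) \<Rightarrow> ('v \<Rightarrow> 'v) \<Rightarrow> bool" where
  "LR_pair scale d A B \<longleftrightarrow> A \<in> End scale \<and> B \<in> End scale \<and>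
     (\<exists>W. is_decomposition scale d W \<and> lowers d W A \<and> raises d W B)"

definition antiautomorphism ::
  "('a::field \<Rightarrow> 'v::ab_group_add \<Rightarrow> 'v) \<Rightarrow> (('v \<Rightarrow> 'v) \<Rightarrow> ('v \<Rightarrow> 'v)) \<Rightarrow> bool" where
  "antiautomorphism scale \<sigma> \<longleftrightarrow>
     bij_betw \<sigma> (End scale) (End scale) \<and>
     (\<forall>X\<in>End scale. \<forall>Y\<in>End scale. \<sigma> (\<lambda>v. X v + Y v) = (\<lambda>v. \<sigma> X v + \<sigma> Y v)) \<and>
     (\<forall>c. \<forall>X\<in>End scale. \<sigma> (\<lambda>v. scale c (X v)) = (\<lambda>v. scale c (\<sigma> X v))) \<and>
     (\<forall>X\<in>End scale. \<forall>Y\<in>End scale. \<sigma> (X \<circ> Y) = \<sigma> Y \<circ> \<sigma> X)"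

end

theory Submission
  imports Defs
begin

text \<open>
  Choose \<open>v\<^sub>0\<close> spanning the bottom space of the decomposition and put \<open>v\<^sub>i = B\<^sup>i v\<^sub>0\<close>.
  Then \<open>B v\<^sub>i = v\<^sub>i\<^sub>+\<^sub>1\<close> and \<open>A v\<^sub>i\<^sub>+\<^sub>1 = \<alpha>\<^sub>i v\<^sub>i\<close> with all \<open>\<alpha>\<^sub>i \<noteq> 0\<close>, so in this basis
  \<open>B\<close> is the lower shift and \<open>A\<close> a weighted upper shift. Transposing matrices in this basis,
  twisted by the diagonal matrix of the partial products of the \<open>\<alpha>\<^sub>i\<close>, is an involutive
  antiautomorphism exchanging \<open>A\<close> and \<open>B\<close>. It is the only one: \<open>B\<^sup>i A\<^sup>d B\<^sup>d\<^sup>-\<^sup>j\<close> is a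
  nonzero multiple of the matrix unit \<open>E\<^sub>i\<^sub>j\<close>, so \<open>A\<close> and \<open>B\<close> generate \<open>End(V)\<close> as an
  algebra, and an antiautomorphism is determined by its values on generators.
\<close>

context vector_space
begin

lemma End_iff:
  "X \<in> End scale \<longleftrightarrow> (\<forall>x y. X (x + y) = X x + X y) \<and> (\<forall>c x. X (c *s x) = c *s X x)"
  unfolding End_def linear_iff using vector_space_axioms by auto

lemma End_apply_add: "X \<in> End scale \<Longrightarrow> X (x + y) = X x + X y"
  and End_apply_scale: "X \<in> End scale \<Longrightarrow> X (c *s x) = c *s X x"
  by (simp_all add: End_iff)

lemma End_apply_0: "X \<in> End scale \<Longrightarrow> X 0 = 0"
  using End_apply_add[of X 0 0] by simp

lemma End_apply_sum: "X \<in> End scale \<Longrightarrow> X (sum f S) = (\<Sum>i\<in>S. X (f i))"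
  by (induction S rule: infinite_finite_induct) (auto simp: End_apply_0 End_apply_add)

lemma End_id: "id \<in> End scale"
  by (simp add: End_iff)

lemma End_comp_closed: "X \<in> End scale \<Longrightarrow> Y \<in> End scale \<Longrightarrow> X \<circ> Y \<in> End scale"
  by (simp add: End_iff)

lemma End_funpow_closed: "X \<in> End scale \<Longrightarrow> X ^^ n \<in> End scale"
  by (induction n) (simp_all add: End_id End_comp_closed)

lemma End_add_closed: "X \<in> End scale \<Longrightarrow> Y \<in> End scale \<Longrightarrow> (\<lambda>x. X x + Y x) \<in> End scale"
  by (simp add: End_iff algebra_simps)

lemma End_scale_closed: "X \<in> End scale \<Longrightarrow> (\<lambda>x. c *s X x) \<in> End scale"
  by (simp add: End_iff algebra_simps scale_left_commute)

lemma End_sum_closed: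
  "(\<And>k. k \<in> K \<Longrightarrow> f k \<in> End scale) \<Longrightarrow> (\<lambda>x. \<Sum>k\<in>K. f k x) \<in> End scale"
  by (simp add: End_iff sum.distrib scale_sum_right)

lemma subspace_dim_1_eq_span_singleton:
  assumes "subspace S" "dim S = 1"
  obtains u where "u \<noteq> 0" "S = span {u}"
proof -
  obtain U where U: "U \<subseteq> S" "independent U" "S \<subseteq> span U" "card U = dim S"
    using basis_exists by blast
  then obtain u where u: "U = {u}"
    using assms(2) card_1_singletonE by metis
  have "u \<noteq> 0"
    using U(2) u by auto
  moreover have "S = span {u}"
    using U(3) u span_minimal[OF U(1) assms(1)] by auto
  ultimately show thesis
    using that by blast
qed

end

inductive_set generated_algebra ::
  "('a::field \<Rightarrow> 'v::ab_group_add \<Rightarrow> 'v) \<Rightarrow> ('v \<Rightarrow> 'v) set \<Rightarrow> ('v \<Rightarrow> 'v) set"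
  for scale S
where
  generator: "X \<in> S \<Longrightarrow> X \<in> generated_algebra scale S"
| id: "id \<in> generated_algebra scale S"
| add: "X \<in> generated_algebra scale S \<Longrightarrow> Y \<in> generated_algebra scale S \<Longrightarrow>
    (\<lambda>x. X x + Y x) \<in> generated_algebra scale S"
| scale: "X \<in> generated_algebra scale S \<Longrightarrow> (\<lambda>x. scale c (X x)) \<in> generated_algebra scale S"
| comp: "X \<in> generated_algebra scale S \<Longrightarrow> Y \<in> generated_algebra scale S \<Longrightarrow>
    X \<circ> Y \<in> generated_algebra scale S"

lemma generated_algebra_funpow:
  "X \<in> generated_algebra scale S \<Longrightarrow> X ^^ n \<in> generated_algebra scale S"
  by (induction n) (auto intro: generated_algebra.intros)

context vector_space
begin

lemma generated_algebra_sum: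
  assumes "finite K" "\<And>k. k \<in> K \<Longrightarrow> f k \<in> generated_algebra scale S"
  shows "(\<lambda>x. \<Sum>k\<in>K. f k x) \<in> generated_algebra scale S"
  using assms
proof (induction K rule: finite_induct)
  case empty
  have "(\<lambda>x. 0 *s id x) \<in> generated_algebra scale S"
    by (intro generated_algebra.scale generated_algebra.id)
  then show ?case
    by simp
next
  case (insert k K)
  then show ?case
    by (simp add: generated_algebra.add)
qed

lemma generated_algebra_subset_End:
  "S \<subseteq> End scale \<Longrightarrow> generated_algebra scale S \<subseteq> End scale"
proof
  fix X assume "S \<subseteq> End scale" and "X \<in> generated_algebra scale S"
  from this(2) show "X \<in> End scale"
    by (induction rule: generated_algebra.induct)
       (use \<open>S \<subseteq> End scale\<close> in \<open>blast intro: End_id End_add_closed End_scale_closed End_comp_closed\<close>)+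
qed

lemma antiautomorphism_add:
  "antiautomorphism scale \<tau> \<Longrightarrow> X \<in> End scale \<Longrightarrow> Y \<in> End scale \<Longrightarrow>
    \<tau> (\<lambda>x. X x + Y x) = (\<lambda>x. \<tau> X x + \<tau> Y x)"
  and antiautomorphism_scale:
  "antiautomorphism scale \<tau> \<Longrightarrow> X \<in> End scale \<Longrightarrow> \<tau> (\<lambda>x. c *s X x) = (\<lambda>x. c *s \<tau> X x)"
  and antiautomorphism_comp:
  "antiautomorphism scale \<tau> \<Longrightarrow> X \<in> End scale \<Longrightarrow> Y \<in> End scale \<Longrightarrow> \<tau> (X \<circ> Y) = \<tau> Y \<circ> \<tau> X"
  unfolding antiautomorphism_def by blast+

lemma antiautomorphism_id:
  assumes "antiautomorphism scale \<tau>"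
  shows "\<tau> id = id"
proof -
  have "\<tau> ` End scale = End scale"
    using assms unfolding antiautomorphism_def by (simp add: bij_betw_imp_surj_on)
  then obtain X where X: "X \<in> End scale" "\<tau> X = id"
    using End_id by (metis imageE)
  have "\<tau> X = \<tau> (id \<circ> X)"
    by simp
  also have "\<dots> = \<tau> X \<circ> \<tau> id"
    using antiautomorphism_comp[OF assms End_id X(1)] .
  finally show ?thesis
    using X(2) by simp
qed

lemma antiautomorphisms_agree_on_generated_algebra:
  assumes \<sigma>: "antiautomorphism scale \<sigma>" and \<tau>: "antiautomorphism scale \<tau>"
    and "S \<subseteq> End scale" "\<And>X. X \<in> S \<Longrightarrow> \<tau> X = \<sigma> X"
    and "X \<in> generated_algebra scale S"
  shows "\<tau> X = \<sigma> X"
  using assms(5)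
proof (induction rule: generated_algebra.induct)
  case id
  show ?case
    using antiautomorphism_id[OF \<sigma>] antiautomorphism_id[OF \<tau>] by (simp only:)
next
  case (add X Y)
  then have "X \<in> End scale" "Y \<in> End scale"
    using generated_algebra_subset_End[OF assms(3)] by auto
  then show ?case
    using add.IH by (simp add: antiautomorphism_add[OF \<sigma>] antiautomorphism_add[OF \<tau>])
next
  case (scale X c)
  then have "X \<in> End scale"
    using generated_algebra_subset_End[OF assms(3)] by auto
  then show ?case
    using scale.IH by (simp add: antiautomorphism_scale[OF \<sigma>] antiautomorphism_scale[OF \<tau>])
next
  case (comp X Y)
  then have "X \<in> End scale" "Y \<in> End scale"
    using generated_algebra_subset_End[OF assms(3)] by auto
  then show ?case
    using comp.IH antiautomorphism_comp[OF \<sigma>] antiautomorphism_comp[OF \<tau>] by metis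
qed (use assms(4) in blast)

end

locale indexed_basis = vector_space +
  fixes d :: nat and v :: "nat \<Rightarrow> 'b"
  assumes spanning: "\<exists>c. x = (\<Sum>i\<le>d. c i *s v i)"
    and independent: "(\<Sum>i\<le>d. c i *s v i) = 0 \<Longrightarrow> i \<le> d \<Longrightarrow> c i = 0"
begin

definition coord :: "nat \<Rightarrow> 'b \<Rightarrow> 'a" where
  "coord i x = (SOME c. x = (\<Sum>j\<le>d. c j *s v j)) i"

lemma coord_expand: "x = (\<Sum>i\<le>d. coord i x *s v i)"
  unfolding coord_def using someI_ex[OF spanning] .

lemma coord_unique:
  assumes "x = (\<Sum>j\<le>d. c j *s v j)" "i \<le> d"
  shows "coord i x = c i"
proof -
  have "(\<Sum>j\<le>d. (coord j x - c j) *s v j) = 0"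
    using coord_expand[of x] assms(1) by (simp add: scale_left_diff_distrib sum_subtractf)
  then show ?thesis
    using independent[of "\<lambda>j. coord j x - c j", OF _ assms(2)] by simp
qed

lemma coord_add: "i \<le> d \<Longrightarrow> coord i (x + y) = coord i x + coord i y"
  by (rule coord_unique)
     (simp add: scale_left_distrib sum.distrib flip: coord_expand)

lemma coord_scale: "i \<le> d \<Longrightarrow> coord i (a *s x) = a * coord i x"
proof (rule coord_unique)
  have "a *s x = a *s (\<Sum>j\<le>d. coord j x *s v j)"
    using coord_expand[of x] by (rule arg_cong)
  then show "a *s x = (\<Sum>j\<le>d. (a * coord j x) *s v j)"
    by (simp add: scale_sum_right)
qed

lemma coord_zero: "i \<le> d \<Longrightarrow> coord i 0 = 0"
  using coord_scale[of i 0 0] by simp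

lemma coord_sum: "i \<le> d \<Longrightarrow> coord i (sum f K) = (\<Sum>k\<in>K. coord i (f k))"
  by (induction K rule: infinite_finite_induct) (simp_all add: coord_zero coord_add)

lemma coord_basis: "i \<le> d \<Longrightarrow> j \<le> d \<Longrightarrow> coord i (v j) = (if i = j then 1 else 0)"
  by (rule coord_unique) (simp_all add: if_distrib[of "\<lambda>c. c *s _"] cong: if_cong)

lemma End_expand: "X \<in> End scale \<Longrightarrow> X y = (\<Sum>j\<le>d. coord j y *s X (v j))"
  by (subst coord_expand[of y]) (simp add: End_apply_sum End_apply_scale)

lemma End_eqI_basis:
  assumes "X \<in> End scale" "Y \<in> End scale" "\<And>k. k \<le> d \<Longrightarrow> X (v k) = Y (v k)"
  shows "X = Y"
proof
  fix y
  show "X y = Y y"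
    using End_expand[OF assms(1), of y] End_expand[OF assms(2), of y] assms(3) by simp
qed

definition mat :: "('b \<Rightarrow> 'b) \<Rightarrow> nat \<Rightarrow> nat \<Rightarrow> 'a" where
  "mat X i j = coord i (X (v j))"

definition of_mat :: "(nat \<Rightarrow> nat \<Rightarrow> 'a) \<Rightarrow> 'b \<Rightarrow> 'b" where
  "of_mat M y = (\<Sum>i\<le>d. (\<Sum>j\<le>d. M i j * coord j y) *s v i)"

lemma of_mat_End: "of_mat M \<in> End scale"
  unfolding of_mat_def End_iff
  by (auto simp: coord_add coord_scale algebra_simps sum.distrib scale_sum_right sum_distrib_left
      intro!: sum.cong)

lemma of_mat_basis: "k \<le> d \<Longrightarrow> of_mat M (v k) = (\<Sum>i\<le>d. M i k *s v i)"
  by (simp add: of_mat_def coord_basis if_distrib[of "\<lambda>c. _ * c"] cong: if_cong)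

lemma mat_of_mat: "i \<le> d \<Longrightarrow> j \<le> d \<Longrightarrow> mat (of_mat M) i j = M i j"
  unfolding mat_def by (simp add: of_mat_basis coord_unique)

lemma End_eqI_mat:
  assumes "X \<in> End scale" "Y \<in> End scale"
    and "\<And>i j. i \<le> d \<Longrightarrow> j \<le> d \<Longrightarrow> mat X i j = mat Y i j"
  shows "X = Y"
proof (rule End_eqI_basis[OF assms(1,2)])
  fix k assume "k \<le> d"
  then show "X (v k) = Y (v k)"
    using coord_expand[of "X (v k)"] coord_expand[of "Y (v k)"] assms(3) by (simp add: mat_def)
qed

lemma mat_comp:
  assumes "X \<in> End scale" "i \<le> d"
  shows "mat (X \<circ> Y) i j = (\<Sum>k\<le>d. mat X i k * mat Y k j)"
proof -
  have "mat (X \<circ> Y) i j = coord i (\<Sum>k\<le>d. coord k (Y (v j)) *s X (v k))"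
    unfolding mat_def comp_def by (rule arg_cong[OF End_expand[OF assms(1)]])
  then show ?thesis
    using assms(2) by (simp add: coord_sum coord_scale mat_def mult.commute)
qed

lemma mat_add: "i \<le> d \<Longrightarrow> mat (\<lambda>y. X y + Y y) i j = mat X i j + mat Y i j"
  unfolding mat_def by (simp add: coord_add)

lemma mat_scale: "i \<le> d \<Longrightarrow> mat (\<lambda>y. c *s X y) i j = c * mat X i j"
  unfolding mat_def by (simp add: coord_scale)

text \<open>With \<open>D = diag g\<close>, the weighted transpose is \<open>X \<mapsto> D\<^sup>-\<^sup>1 X\<^sup>T D\<close>.\<close>

definition weighted_transpose :: "(nat \<Rightarrow> 'a) \<Rightarrow> ('b \<Rightarrow> 'b) \<Rightarrow> 'b \<Rightarrow> 'b" where
  "weighted_transpose g X = of_mat (\<lambda>i j. g j / g i * mat X j i)"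

lemma weighted_transpose_End: "weighted_transpose g X \<in> End scale"
  unfolding weighted_transpose_def by (rule of_mat_End)

lemma mat_weighted_transpose:
  "i \<le> d \<Longrightarrow> j \<le> d \<Longrightarrow> mat (weighted_transpose g X) i j = g j / g i * mat X j i"
  unfolding weighted_transpose_def by (rule mat_of_mat)

context
  fixes g :: "nat \<Rightarrow> 'a"
  assumes g_nonzero: "\<And>i. i \<le> d \<Longrightarrow> g i \<noteq> 0"
begin

lemma weighted_transpose_involutive:
  "X \<in> End scale \<Longrightarrow> weighted_transpose g (weighted_transpose g X) = X"
  by (rule End_eqI_mat[OF weighted_transpose_End])
     (auto simp: mat_weighted_transpose g_nonzero)

lemma weighted_transpose_add:
  assumes "X \<in> End scale" "Y \<in> End scale"
  shows "weighted_transpose g (\<lambda>y. X y + Y y) =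
    (\<lambda>y. weighted_transpose g X y + weighted_transpose g Y y)"
  by (intro End_eqI_mat weighted_transpose_End End_add_closed)
     (simp add: mat_weighted_transpose mat_add algebra_simps)

lemma weighted_transpose_scale:
  "weighted_transpose g (\<lambda>y. c *s X y) = (\<lambda>y. c *s weighted_transpose g X y)"
  by (intro End_eqI_mat weighted_transpose_End End_scale_closed)
     (simp add: mat_weighted_transpose mat_scale)

lemma weighted_transpose_comp:
  assumes "X \<in> End scale" "Y \<in> End scale"
  shows "weighted_transpose g (X \<circ> Y) = weighted_transpose g Y \<circ> weighted_transpose g X"
proof (intro End_eqI_mat weighted_transpose_End End_comp_closed)
  fix i j assume ij: "i \<le> d" "j \<le> d"
  have "mat (weighted_transpose g (X \<circ> Y)) i j = g j / g i * (\<Sum>k\<le>d. mat X j k * mat Y k i)"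
    using ij assms by (simp add: mat_weighted_transpose mat_comp)
  also have "\<dots> = (\<Sum>k\<le>d. (g k / g i * mat Y k i) * (g j / g k * mat X j k))"
    unfolding sum_distrib_left by (intro sum.cong refl) (simp add: g_nonzero field_simps)
  also have "\<dots> = mat (weighted_transpose g Y \<circ> weighted_transpose g X) i j"
    using ij by (simp add: mat_comp weighted_transpose_End mat_weighted_transpose)
  finally show "mat (weighted_transpose g (X \<circ> Y)) i j =
      mat (weighted_transpose g Y \<circ> weighted_transpose g X) i j" .
qed

lemma antiautomorphism_weighted_transpose: "antiautomorphism scale (weighted_transpose g)"
  unfolding antiautomorphism_def
proof (intro conjI ballI allI)
  show "bij_betw (weighted_transpose g) (End scale) (End scale)"
    by (rule bij_betw_byWitness[where f' = "weighted_transpose g"])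
       (auto simp: weighted_transpose_involutive weighted_transpose_End)
qed (simp_all add: weighted_transpose_add weighted_transpose_scale weighted_transpose_comp)

end

end

locale LR_frame = vector_space +
  fixes d :: nat and A B :: "'b \<Rightarrow> 'b" and W :: "nat \<Rightarrow> 'b set"
  assumes A_End: "A \<in> End scale" and B_End: "B \<in> End scale"
    and decomposition: "is_decomposition scale d W"
    and lowers: "lowers d W A" and raises: "raises d W B"
begin

lemma W_eq_span_singleton: "i \<le> d \<Longrightarrow> \<exists>u. u \<noteq> 0 \<and> W i = span {u}"
  using decomposition subspace_dim_1_eq_span_singleton unfolding is_decomposition_def by metis

definition v :: "nat \<Rightarrow> 'b" where
  "v i = (B ^^ i) (SOME u. u \<noteq> 0 \<and> W 0 = span {u})"

lemma B_v: "B (v i) = v (Suc i)"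
  by (simp add: v_def)

lemma B_pow_v: "(B ^^ n) (v k) = v (n + k)"
  by (simp add: v_def funpow_add)

lemma W_eq_span_v: "i \<le> d \<Longrightarrow> v i \<noteq> 0 \<and> W i = span {v i}"
proof (induction i)
  case 0
  then show ?case
    using someI_ex[OF W_eq_span_singleton[of 0]] by (simp add: v_def)
next
  case (Suc i)
  have "W (Suc i) = B ` W i"
    using raises Suc.prems unfolding raises_def by simp
  also have "\<dots> = B ` span {v i}"
    using Suc by simp
  also have "\<dots> = span {v (Suc i)}"
    using B_End by (auto simp: span_singleton End_apply_scale B_v image_iff)
  finally have W_Suc: "W (Suc i) = span {v (Suc i)}" .
  obtain u where "u \<noteq> 0" "W (Suc i) = span {u}"
    using W_eq_span_singleton[OF Suc.prems] by blast
  then have "v (Suc i) \<noteq> 0"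
    using W_Suc span_base[of u "{u}"] by auto
  with W_Suc show ?case
    by simp
qed

lemma v_in_W: "i \<le> d \<Longrightarrow> v i \<in> W i"
  using W_eq_span_v by (simp add: span_base)

lemma v_beyond: "d < i \<Longrightarrow> v i = 0"
proof (induction i)
  case (Suc i)
  have "B (v d) = 0"
    using raises v_in_W[of d] unfolding raises_def by blast
  then show ?case
    using Suc B_v End_apply_0[OF B_End] by (metis less_Suc_eq)
qed simp

lemma v_independent:
  assumes "(\<Sum>i\<le>d. c i *s v i) = 0" "i \<le> d"
  shows "c i = 0"
proof -
  define decomposes_0 where
    "decomposes_0 w \<longleftrightarrow>
      (\<forall>i>d. w i = 0) \<and> (\<forall>i\<le>d. w i \<in> W i) \<and> (0::'b) = (\<Sum>i\<le>d. w i)" for w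
  have "\<exists>!w. decomposes_0 w"
    using decomposition unfolding is_decomposition_def decomposes_0_def
    by (rule conjunct2[THEN spec])
  moreover have "decomposes_0 (\<lambda>i. if i \<le> d then c i *s v i else 0)"
    using W_eq_span_v assms(1) by (simp add: decomposes_0_def span_scale span_base)
  moreover have "decomposes_0 (\<lambda>_. 0)"
    using W_eq_span_v by (simp add: decomposes_0_def span_zero)
  ultimately have "c i *s v i = 0"
    using assms(2) by (metis (mono_tags, lifting))
  then show ?thesis
    using W_eq_span_v[OF assms(2)] by simp
qed

lemma v_spanning: "\<exists>c. x = (\<Sum>i\<le>d. c i *s v i)"
proof -
  obtain w where w: "\<forall>i\<le>d. w i \<in> W i" "x = (\<Sum>i\<le>d. w i)"
    using decomposition unfolding is_decomposition_def by blast
  have "\<exists>c. w i = c *s v i" if "i \<le> d" for i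
    using w(1) W_eq_span_v[OF that] that by (auto simp: span_singleton)
  then obtain c where "\<And>i. i \<le> d \<Longrightarrow> w i = c i *s v i"
    by metis
  then show ?thesis
    using w(2) by (intro exI[of _ c]) simp
qed

sublocale indexed_basis scale d v
  by unfold_locales (fact v_spanning, fact v_independent)

definition alpha :: "nat \<Rightarrow> 'a" where
  "alpha j = coord j (A (v (Suc j)))"

lemma A_v_0: "A (v 0) = 0"
  using lowers v_in_W[of 0] unfolding lowers_def by auto

lemma A_image_W_Suc: "j < d \<Longrightarrow> A ` span {v (Suc j)} = span {v j}"
proof -
  assume "j < d"
  have "\<forall>i. 1 \<le> i \<and> i \<le> d \<longrightarrow> A ` W i = W (i - 1)"
    using lowers unfolding lowers_def by blast
  from this[rule_format, of "Suc j"] \<open>j < d\<close> have "A ` W (Suc j) = W j"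
    by simp
  then show ?thesis
    using W_eq_span_v[of j] W_eq_span_v[of "Suc j"] \<open>j < d\<close> by simp
qed

lemma A_v_Suc: "j < d \<Longrightarrow> A (v (Suc j)) = alpha j *s v j"
proof -
  assume "j < d"
  then obtain c where c: "A (v (Suc j)) = c *s v j"
    using A_image_W_Suc[of j] span_base[of "v (Suc j)" "{v (Suc j)}"] by (auto simp: span_singleton)
  then have "alpha j = c"
    using \<open>j < d\<close> by (simp add: alpha_def coord_scale coord_basis)
  with c show ?thesis
    by simp
qed

lemma alpha_nonzero: "j < d \<Longrightarrow> alpha j \<noteq> 0"
proof -
  assume "j < d"
  then obtain c where "v j = A (c *s v (Suc j))"
    using A_image_W_Suc[of j] span_base[of "v j" "{v j}"] by (auto simp: span_singleton)
  then have "v j = (c * alpha j) *s v j"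
    using \<open>j < d\<close> by (simp add: End_apply_scale[OF A_End] A_v_Suc)
  then show ?thesis
    using W_eq_span_v[of j] \<open>j < d\<close> by auto
qed

primrec weight :: "nat \<Rightarrow> 'a" where
  "weight 0 = 1"
| "weight (Suc j) = weight j * alpha j"

lemma weight_nonzero: "j \<le> d \<Longrightarrow> weight j \<noteq> 0"
  by (induction j) (simp_all add: alpha_nonzero)

lemma mat_A: "i \<le> d \<Longrightarrow> j \<le> d \<Longrightarrow> mat A i j = (if j = Suc i then alpha i else 0)"
  by (cases j) (auto simp: mat_def A_v_0 A_v_Suc coord_zero coord_scale coord_basis)

lemma mat_B: "i \<le> d \<Longrightarrow> j \<le> d \<Longrightarrow> mat B i j = (if i = Suc j then 1 else 0)"
  by (cases "Suc j \<le> d") (auto simp: mat_def B_v coord_basis v_beyond coord_zero)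

lemma weighted_transpose_A: "weighted_transpose weight A = B"
  by (rule End_eqI_mat[OF weighted_transpose_End B_End])
     (auto simp: mat_weighted_transpose mat_A mat_B weight_nonzero alpha_nonzero Suc_le_eq)

lemma weighted_transpose_B: "weighted_transpose weight B = A"
  by (rule End_eqI_mat[OF weighted_transpose_End A_End])
     (auto simp: mat_weighted_transpose mat_A mat_B weight_nonzero)

lemma antiautomorphism_weighted_transpose_weight: "antiautomorphism scale (weighted_transpose weight)"
  using weight_nonzero by (rule antiautomorphism_weighted_transpose)

lemma weighted_transpose_weight_involutive:
  "X \<in> End scale \<Longrightarrow> weighted_transpose weight (weighted_transpose weight X) = X"
  using weight_nonzero by (rule weighted_transpose_involutive)

lemma A_pow_v_self: "n \<le> d \<Longrightarrow> (A ^^ n) (v n) = weight n *s v 0"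
proof (induction n)
  case (Suc n)
  have "(A ^^ Suc n) (v (Suc n)) = (A ^^ n) (alpha n *s v n)"
    using Suc.prems by (simp add: funpow_Suc_right A_v_Suc del: funpow.simps)
  also have "\<dots> = weight (Suc n) *s v 0"
    using Suc by (simp add: End_apply_scale[OF End_funpow_closed[OF A_End]] mult.commute)
  finally show ?case .
qed simp

lemma A_pow_v_below: "m < n \<Longrightarrow> m \<le> d \<Longrightarrow> (A ^^ n) (v m) = 0"
proof -
  assume "m < n" "m \<le> d"
  then have "A ^^ n = A ^^ (n - Suc m) \<circ> (A \<circ> A ^^ m)"
    by (metis Suc_leI funpow.simps(2) funpow_add le_add_diff_inverse2)
  then show ?thesis
    using \<open>m \<le> d\<close> by (simp add: A_pow_v_self End_apply_scale[OF A_End] A_v_0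
        End_apply_0[OF End_funpow_closed[OF A_End]])
qed

definition matrix_unit :: "nat \<Rightarrow> nat \<Rightarrow> 'b \<Rightarrow> 'b" where
  "matrix_unit i j = B ^^ i \<circ> A ^^ d \<circ> B ^^ (d - j)"

lemma matrix_unit_End: "matrix_unit i j \<in> End scale"
  unfolding matrix_unit_def by (intro End_comp_closed End_funpow_closed A_End B_End)

lemma matrix_unit_v:
  assumes "i \<le> d" "j \<le> d" "k \<le> d"
  shows "matrix_unit i j (v k) = (if k = j then weight d *s v i else 0)"
proof -
  have unit: "matrix_unit i j (v k) = (B ^^ i) ((A ^^ d) (v (d - j + k)))"
    by (simp add: matrix_unit_def B_pow_v)
  have B_pow_0: "(B ^^ i) 0 = 0"
    by (rule End_apply_0[OF End_funpow_closed[OF B_End]])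
  consider "k = j" | "k < j" | "j < k"
    by linarith
  then show ?thesis
  proof cases
    case 1
    then show ?thesis
      using assms unit
      by (simp add: A_pow_v_self B_pow_v End_apply_scale[OF End_funpow_closed[OF B_End]])
  next
    case 2
    then show ?thesis
      using assms unit B_pow_0 by (simp add: A_pow_v_below)
  next
    case 3
    then show ?thesis
      using assms unit B_pow_0 by (simp add: v_beyond End_apply_0[OF End_funpow_closed[OF A_End]])
  qed
qed

lemma End_eq_sum_matrix_units:
  assumes "X \<in> End scale"
  shows "X = (\<lambda>y. \<Sum>i\<le>d. \<Sum>j\<le>d. (mat X i j / weight d) *s matrix_unit i j y)"
proof (rule End_eqI_basis[OF assms])
  show "(\<lambda>y. \<Sum>i\<le>d. \<Sum>j\<le>d. (mat X i j / weight d) *s matrix_unit i j y) \<in> End scale"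
    by (intro End_sum_closed End_scale_closed matrix_unit_End)
  fix k assume "k \<le> d"
  then have "(\<Sum>i\<le>d. \<Sum>j\<le>d. (mat X i j / weight d) *s matrix_unit i j (v k)) =
      (\<Sum>i\<le>d. mat X i k *s v i)"
    by (intro sum.cong refl) (simp add: matrix_unit_v weight_nonzero if_distrib[of "\<lambda>x. _ *s x"] cong: if_cong)
  also have "\<dots> = X (v k)"
    unfolding mat_def by (rule coord_expand[symmetric])
  finally show "X (v k) = (\<Sum>i\<le>d. \<Sum>j\<le>d. (mat X i j / weight d) *s matrix_unit i j (v k))"
    by simp
qed

lemma End_subset_generated_algebra: "End scale \<subseteq> generated_algebra scale {A, B}"
proof
  fix X assume "X \<in> End scale"
  have "matrix_unit i j \<in> generated_algebra scale {A, B}" for i j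
    unfolding matrix_unit_def
    by (intro generated_algebra.comp generated_algebra_funpow generated_algebra.generator) simp_all
  then have "(\<lambda>y. \<Sum>i\<le>d. \<Sum>j\<le>d. (mat X i j / weight d) *s matrix_unit i j y)
      \<in> generated_algebra scale {A, B}"
    by (intro generated_algebra_sum generated_algebra.scale) simp_all
  then show "X \<in> generated_algebra scale {A, B}"
    using End_eq_sum_matrix_units[OF \<open>X \<in> End scale\<close>] by simp
qed

lemma antiautomorphism_eq_weighted_transpose:
  assumes \<tau>: "antiautomorphism scale \<tau>" and "\<tau> A = B" "\<tau> B = A" and "X \<in> End scale"
  shows "\<tau> X = weighted_transpose weight X"
proof (rule antiautomorphisms_agree_on_generated_algebra[OF antiautomorphism_weighted_transpose_weight \<tau>])
  show "{A, B} \<subseteq> End scale"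
    using A_End B_End by simp
  show "\<tau> Y = weighted_transpose weight Y" if "Y \<in> {A, B}" for Y
    using that assms(2,3) weighted_transpose_A weighted_transpose_B by auto
  show "X \<in> generated_algebra scale {A, B}"
    using End_subset_generated_algebra \<open>X \<in> End scale\<close> ..
qed

end

theorem proposition6p1:
  fixes scale :: "'a::field \<Rightarrow> 'v::ab_group_add \<Rightarrow> 'v"
    and d :: nat and A B :: "'v \<Rightarrow> 'v"
  assumes "vector_space scale"
    and "vector_space.dim scale (UNIV :: 'v set) = d + 1"
    and "LR_pair scale d A B"
  shows "\<exists>\<sigma>. antiautomorphism scale \<sigma> \<and> \<sigma> A = B \<and> \<sigma> B = A \<and>
           (\<forall>\<tau>. antiautomorphism scale \<tau> \<and> \<tau> A = B \<and> \<tau> B = A \<longrightarrow>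
                 (\<forall>X\<in>End scale. \<tau> X = \<sigma> X)) \<and>
           (\<forall>X\<in>End scale. \<sigma> (\<sigma> X) = X)"
proof -
  obtain W where "A \<in> End scale" "B \<in> End scale" "is_decomposition scale d W"
    "lowers d W A" "raises d W B"
    using assms(3) unfolding LR_pair_def by blast
  with assms(1) interpret LR_frame scale d A B W
    by (simp add: LR_frame_def LR_frame_axioms_def)
  show ?thesis
  proof (intro exI[of _ "weighted_transpose weight"] conjI allI impI ballI)
    show "antiautomorphism scale (weighted_transpose weight)"
      by (fact antiautomorphism_weighted_transpose_weight)
    show "weighted_transpose weight A = B" "weighted_transpose weight B = A"
      by (fact weighted_transpose_A, fact weighted_transpose_B)
  next
    fix \<tau> X
    assume "antiautomorphism scale \<tau> \<and> \<tau> A = B \<and> \<tau> B = A" "X \<in> End scale"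
    then show "\<tau> X = weighted_transpose weight X"
      using antiautomorphism_eq_weighted_transpose by blast
  next
    fix X
    assume "X \<in> End scale"
    then show "weighted_transpose weight (weighted_transpose weight X) = X"
      by (rule weighted_transpose_weight_involutive)
  qed
qed

end
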